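(* Let $G$, $P$, $n$, $\alpha$, $n'$, $\zeta$, $\mathcal C_{\mathrm{pool}}$ and $P(\mathbf c)$ be as in the context, and let $\bar P_{\max}=\max_{\mathbf c\in\mathcal C_{\mathrm{pool}}}P(\mathbf c)$. Then $$\bar P_{\max}\le\frac{2^{-2\alpha n\zeta\sum_{e\in E}\log_2 p(\tau(e)\mid\sigma(e))}}{|\mathcal C_{\mathrm{pool}}|}.$$
   Context: $G=(V,E,L)$ is a deterministic, lossless, primitive labeled directed graph over a finite alphabet $\Sigma$; edge $e$ has initial vertex $\sigma(e)$, terminal vertex $\tau(e)$, label $L(e)$. $P$ is a probability mass function on $E$ with $P(e)>0$ for all $e$, stationary: with $\pi(u)=\sum_{e:\sigma(e)=u}P(e)$, $\pi(u)=\sum_{e:\tau(e)=u}P(e)$. Write $p(\tau(e)\mid\sigma(e))=P(e)/\pi(\sigma(e))$; $P_{\min}=\min_eP(e)$. $n$ is a positive integer with $nP(e)\in\mathbb Z$ for all $e$; $\alpha\in(0,1)$, $n'=\lfloor\alpha n\rfloor$, $0<\zeta<\frac{1-\alpha}{\alpha}P_{\min}$, $v_{\mathrm{root}}\in V$ fixed. $\mathcal W$ is the set of paths $\mathbf w=(e_1,\dots,e_{n'})$ with $\sigma(e_1)=v_{\mathrm{root}}$ and $|S_{\mathbf w}(e)/n'-P(e)|<\zeta$ for all $e$, where $S_{\mathbf w}(e)$ counts occurrences of $e$ in $\mathbf w$. For $\mathbf w\in\mathcal W$ ending at $v_{\mathrm{end}}$, the multigraph with $nP(e)-S_{\mathbf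 w}(e)>0$ copies of each $e$ has an Eulerian path from $v_{\mathrm{end}}$ to $v_{\mathrm{root}}$; $\Phi(\mathbf w)$ is the lexicographically first. $\mathcal C_{\mathrm{pool}}=\{L(\mathbf w\|\Phi(\mathbf w)):\mathbf w\in\mathcal W\}$; each codeword $\mathbf c$ has a unique prefix $\mathbf w$, and $P(\mathbf c)=\prod_{i=1}^{n'}p(\tau(e_i)\mid\sigma(e_i))$, the probability that a length-$n'$ random walk governed by $P$ from $v_{\mathrm{root}}$ (choosing edge $e$ out of $u$ with probability $P(e)/\pi(u)$) equals that prefix. *)

theory Defs
  imports Complex_Main
begin

definition is_walk :: "'e set \<Rightarrow> ('e \<Rightarrow> 'v) \<Rightarrow> ('e \<Rightarrow> 'v) \<Rightarrow> 'v \<Rightarrow> 'v \<Rightarrow> 'e list \<Rightarrow> bool" where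
  "is_walk E sg tu u v q \<longleftrightarrow>
     set q \<subseteq> E \<and> (\<forall>i. Suc i < length q \<longrightarrow> tu (q ! i) = sg (q ! Suc i)) \<and>
     (q = [] \<longrightarrow> u = v) \<and> (q \<noteq> [] \<longrightarrow> sg (hd q) = u \<and> tu (last q) = v)"

definition deterministic :: "'e set \<Rightarrow> ('e \<Rightarrow> 'v) \<Rightarrow> ('e \<Rightarrow> 'a) \<Rightarrow> bool" where
  "deterministic E sg L \<longleftrightarrow> (\<forall>e1\<in>E. \<forall>e2\<in>E. sg e1 = sg e2 \<and> L e1 = L e2 \<longrightarrow> e1 = e2)"

definition lossless :: "'e set \<Rightarrow> ('e \<Rightarrow> 'v) \<Rightarrow> ('e \<Rightarrow> 'v) \<Rightarrow> ('e \<Rightarrow> 'a) \<Rightarrow> bool" where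
  "lossless E sg tu L \<longleftrightarrow>
     (\<forall>u v p q. is_walk E sg tu u v p \<and> is_walk E sg tu u v q \<and> p \<noteq> q \<longrightarrow> map L p \<noteq> map L q)"

text \<open>Primitive: some power of the adjacency matrix is entrywise positive.\<close>
definition primitive :: "'v set \<Rightarrow> 'e set \<Rightarrow> ('e \<Rightarrow> 'v) \<Rightarrow> ('e \<Rightarrow> 'v) \<Rightarrow> bool" where
  "primitive V E sg tu \<longleftrightarrow>
     (\<exists>k>0. \<forall>u\<in>V. \<forall>v\<in>V. \<exists>q. length q = k \<and> is_walk E sg tu u v q)"

definition stat_pi :: "'e set \<Rightarrow> ('e \<Rightarrow> 'v) \<Rightarrow> ('e \<Rightarrow> real) \<Rightarrow> 'v \<Rightarrow> real" where
  "stat_pi E sg P u = (\<Sum>e\<in>{e\<in>E. sg e = u}. P e)"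

text \<open>p(tau(e) | sigma(e)) = P(e) / pi(sigma(e)).\<close>
definition cond_prob :: "'e set \<Rightarrow> ('e \<Rightarrow> 'v) \<Rightarrow> ('e \<Rightarrow> real) \<Rightarrow> 'e \<Rightarrow> real" where
  "cond_prob E sg P e = P e / stat_pi E sg P (sg e)"

definition walk_end :: "('e \<Rightarrow> 'v) \<Rightarrow> 'v \<Rightarrow> 'e list \<Rightarrow> 'v" where
  "walk_end tu v0 w = (if w = [] then v0 else tu (last w))"

definition typical_walks ::
  "'e set \<Rightarrow> ('e \<Rightarrow> 'v) \<Rightarrow> ('e \<Rightarrow> 'v) \<Rightarrow> ('e \<Rightarrow> real) \<Rightarrow> 'v \<Rightarrow> nat \<Rightarrow> real \<Rightarrow> 'e list set" where
  "typical_walks E sg tu P vroot n' \<zeta> =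
     {w. length w = n' \<and> (\<exists>v. is_walk E sg tu vroot v w) \<and>
         (\<forall>e\<in>E. \<bar>real (count_list w e) / real n' - P e\<bar> < \<zeta>)}"

text \<open>q is an Eulerian path from the end of w to vroot in the multigraph having
  n P(e) - S_w(e) copies of each edge e.\<close>
definition euler_completion ::
  "'e set \<Rightarrow> ('e \<Rightarrow> 'v) \<Rightarrow> ('e \<Rightarrow> 'v) \<Rightarrow> ('e \<Rightarrow> real) \<Rightarrow> nat \<Rightarrow> 'v \<Rightarrow> 'e list \<Rightarrow> 'e list \<Rightarrow> bool" where
  "euler_completion E sg tu P n vroot w q \<longleftrightarrow>
     is_walk E sg tu (walk_end tu vroot w) vroot q \<and>
     (\<forall>e\<in>E. real (count_list q e) = real n * P e - real (count_list w e))"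

definition Phi ::
  "'e set \<Rightarrow> ('e \<Rightarrow> 'v) \<Rightarrow> ('e \<Rightarrow> 'v) \<Rightarrow> ('e \<Rightarrow> 'a::linorder) \<Rightarrow> ('e \<Rightarrow> real) \<Rightarrow> nat \<Rightarrow> 'v
     \<Rightarrow> 'e list \<Rightarrow> 'e list" where
  "Phi E sg tu L P n vroot w =
     (THE q. euler_completion E sg tu P n vroot w q \<and>
        (\<forall>q'. euler_completion E sg tu P n vroot w q' \<longrightarrow> lexordp_eq (map L q) (map L q')))"

definition C_pool ::
  "'e set \<Rightarrow> ('e \<Rightarrow> 'v) \<Rightarrow> ('e \<Rightarrow> 'v) \<Rightarrow> ('e \<Rightarrow> 'a::linorder) \<Rightarrow> ('e \<Rightarrow> real) \<Rightarrow> nat \<Rightarrow> nat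
     \<Rightarrow> real \<Rightarrow> 'v \<Rightarrow> 'a list set" where
  "C_pool E sg tu L P n n' \<zeta> vroot =
     (\<lambda>w. map L (w @ Phi E sg tu L P n vroot w)) ` typical_walks E sg tu P vroot n' \<zeta>"

definition code_prob ::
  "'e set \<Rightarrow> ('e \<Rightarrow> 'v) \<Rightarrow> ('e \<Rightarrow> 'v) \<Rightarrow> ('e \<Rightarrow> 'a::linorder) \<Rightarrow> ('e \<Rightarrow> real) \<Rightarrow> nat \<Rightarrow> nat
     \<Rightarrow> real \<Rightarrow> 'v \<Rightarrow> 'a list \<Rightarrow> real" where
  "code_prob E sg tu L P n n' \<zeta> vroot c =
     prod_list (map (cond_prob E sg P)
       (THE w. w \<in> typical_walks E sg tu P vroot n' \<zeta> \<and> map L (w @ Phi E sg tu L P n vroot w) = c))"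

end

theory Submission
  imports Defs
begin

(* The probability of a walk w is 2 powr (\<Sum>e. S_w(e) log2 p(e)), so it depends only on the
   edge counts S_w. Any two typical prefixes have counts within 2 n' \<zeta> \<le> 2 \<alpha> n \<zeta> of each
   other, and log2 p(e) \<le> 0, so their probabilities differ at most by the factor
   R = 2 powr (-2 \<alpha> n \<zeta> \<Sum>e. log2 p(e)). As all prefixes of length n' from vroot have total
   probability at most 1, averaging gives P(w) \<le> R / |W| for every typical w. Determinism
   makes a codeword determine its prefix, so |C_pool| = |W| and P(c) is the prefix probability. *)

lemma is_walk_Nil [simp]: "is_walk E sg tu u v [] \<longleftrightarrow> u = v"
  by (simp add: is_walk_def)

lemma is_walk_Cons [simp]:
  "is_walk E sg tu u v (e # w) \<longleftrightarrow> e \<in> E \<and> sg e = u \<and> is_walk E sg tu (tu e) v w"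
  by (cases w) (auto simp: is_walk_def nth_Cons split: nat.splits)

lemma deterministic_walks_eqI:
  assumes "deterministic E sg L"
    and "is_walk E sg tu u v1 w1" "is_walk E sg tu u v2 w2" "map L w1 = map L w2"
  shows "w1 = w2"
  using assms(2-4)
proof (induction w1 arbitrary: u w2)
  case Nil
  then show ?case by simp
next
  case (Cons e w1)
  then obtain e' w2' where w2: "w2 = e' # w2'"
    by (cases w2) auto
  with Cons.prems assms(1) have "e = e'"
    by (auto simp: deterministic_def)
  with Cons w2 show ?case by auto
qed

definition walks_from :: "'e set \<Rightarrow> ('e \<Rightarrow> 'v) \<Rightarrow> ('e \<Rightarrow> 'v) \<Rightarrow> 'v \<Rightarrow> nat \<Rightarrow> 'e list set" where
  "walks_from E sg tu u k = {w. length w = k \<and> (\<exists>v. is_walk E sg tu u v w)}"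

lemma walks_from_0: "walks_from E sg tu u 0 = {[]}"
  by (auto simp: walks_from_def)

lemma walks_from_Suc:
  "walks_from E sg tu u (Suc k) =
     (\<lambda>(e, w). e # w) ` (SIGMA e:{e\<in>E. sg e = u}. walks_from E sg tu (tu e) k)"
  by (auto simp: walks_from_def length_Suc_conv image_iff)

lemma finite_walks_from: "finite E \<Longrightarrow> finite (walks_from E sg tu u k)"
  by (rule finite_subset[OF _ finite_lists_length_eq[of E k]])
    (auto simp: walks_from_def is_walk_def)

lemma typical_walks_subset_walks_from:
  "typical_walks E sg tu P u k \<zeta> \<subseteq> walks_from E sg tu u k"
  by (auto simp: typical_walks_def walks_from_def)

lemma sum_prod_list_walks_from_le_1:
  fixes p :: "'e \<Rightarrow> real"
  assumes "finite E" "\<forall>e\<in>E. 0 \<le> p e" "\<forall>u. (\<Sum>e\<in>{e\<in>E. sg e = u}. p e) \<le> 1"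
  shows "(\<Sum>w\<in>walks_from E sg tu u k. prod_list (map p w)) \<le> 1"
proof (induction k arbitrary: u)
  case 0
  then show ?case by (simp add: walks_from_0)
next
  case (Suc k)
  let ?A = "{e\<in>E. sg e = u}"
  have "(\<Sum>w\<in>walks_from E sg tu u (Suc k). prod_list (map p w))
      = (\<Sum>e\<in>?A. p e * (\<Sum>w\<in>walks_from E sg tu (tu e) k. prod_list (map p w)))"
    unfolding walks_from_Suc using assms(1)
    by (subst sum.reindex)
      (auto simp: inj_on_def sum.Sigma finite_walks_from sum_distrib_left case_prod_unfold)
  also have "\<dots> \<le> (\<Sum>e\<in>?A. p e)"
    by (rule sum_mono) (use Suc assms(2) in \<open>auto intro: mult_left_le\<close>)
  also have "\<dots> \<le> 1"
    using assms(3) by blast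
  finally show ?case .
qed

lemma cond_prob_pos_le_1:
  assumes "finite E" "\<forall>e\<in>E. 0 < P e" "e \<in> E"
  shows "0 < cond_prob E sg P e" "cond_prob E sg P e \<le> 1"
proof -
  have "P e \<le> stat_pi E sg P (sg e)"
    unfolding stat_pi_def by (rule member_le_sum) (use assms in auto)
  moreover have "0 < P e"
    using assms by blast
  ultimately show "0 < cond_prob E sg P e" "cond_prob E sg P e \<le> 1"
    by (simp_all add: cond_prob_def)
qed

lemma sum_cond_prob_out_le_1: "(\<Sum>e\<in>{e\<in>E. sg e = u}. cond_prob E sg P e) \<le> 1"
proof -
  have "(\<Sum>e\<in>{e\<in>E. sg e = u}. cond_prob E sg P e)
      = (\<Sum>e\<in>{e\<in>E. sg e = u}. P e / stat_pi E sg P u)"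
    by (rule sum.cong) (simp_all add: cond_prob_def)
  also have "\<dots> = stat_pi E sg P u / stat_pi E sg P u"
    by (simp add: stat_pi_def sum_divide_distrib[symmetric])
  finally show ?thesis
    by simp
qed

abbreviation walk_prob :: "'e set \<Rightarrow> ('e \<Rightarrow> 'v) \<Rightarrow> ('e \<Rightarrow> real) \<Rightarrow> 'e list \<Rightarrow> real" where
  "walk_prob E sg P w \<equiv> prod_list (map (cond_prob E sg P) w)"

lemma sum_walk_prob_le_1:
  assumes "finite E" "\<forall>e\<in>E. 0 < P e" "W \<subseteq> walks_from E sg tu u k"
  shows "(\<Sum>w\<in>W. walk_prob E sg P w) \<le> 1"
proof -
  have "0 \<le> walk_prob E sg P w" if "w \<in> walks_from E sg tu u k" for w
    using that cond_prob_pos_le_1(1)[OF assms(1,2)]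
    by (intro prod_list_nonneg) (auto simp: walks_from_def is_walk_def intro: less_imp_le)
  then have "(\<Sum>w\<in>W. walk_prob E sg P w) \<le> (\<Sum>w\<in>walks_from E sg tu u k. walk_prob E sg P w)"
    by (intro sum_mono2[OF finite_walks_from[OF assms(1)] assms(3)]) auto
  also have "\<dots> \<le> 1"
    using assms(1) cond_prob_pos_le_1(1)[OF assms(1,2)]
    by (intro sum_prod_list_walks_from_le_1) (auto intro: less_imp_le sum_cond_prob_out_le_1)
  finally show ?thesis .
qed

lemma sum_list_map_eq_sum_count_of_nat:
  fixes f :: "'a \<Rightarrow> 'b::comm_semiring_1"
  assumes "finite X" "set xs \<subseteq> X"
  shows "sum_list (map f xs) = (\<Sum>x\<in>X. of_nat (count_list xs x) * f x)"
  using assms(2)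
proof (induction xs)
  case (Cons a xs)
  have "(\<Sum>x\<in>X. of_nat (count_list (a # xs) x) * f x)
      = (\<Sum>x\<in>X. of_nat (count_list xs x) * f x + (if x = a then f x else 0))"
    by (rule sum.cong) (auto simp: algebra_simps)
  with Cons assms(1) show ?case
    by (simp add: sum.distrib sum.delta' ac_simps)
qed simp

lemma prod_list_eq_powr_sum_count_log:
  fixes p :: "'e \<Rightarrow> real"
  assumes "finite E" "set w \<subseteq> E" "\<forall>e\<in>E. 0 < p e" "0 < b" "b \<noteq> 1"
  shows "prod_list (map p w) = b powr (\<Sum>e\<in>E. real (count_list w e) * log b (p e))"
proof -
  have "prod_list (map p w) = b powr sum_list (map (\<lambda>e. log b (p e)) w)"
    using assms(2-5) by (induction w) (auto simp: powr_add)
  then show ?thesis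
    by (simp add: sum_list_map_eq_sum_count_of_nat[OF assms(1,2)])
qed

lemma prod_list_le_powr_mult_prod_list:
  fixes p :: "'e \<Rightarrow> real"
  assumes "finite E" "set w1 \<subseteq> E" "set w2 \<subseteq> E" "\<forall>e\<in>E. 0 < p e \<and> p e \<le> 1"
    and "\<forall>e\<in>E. real (count_list w2 e) \<le> real (count_list w1 e) + d"
  shows "prod_list (map p w1) \<le> 2 powr (- d * (\<Sum>e\<in>E. log 2 (p e))) * prod_list (map p w2)"
proof -
  have "(\<Sum>e\<in>E. real (count_list w1 e) * log 2 (p e))
      \<le> (\<Sum>e\<in>E. (real (count_list w2 e) - d) * log 2 (p e))"
    by (rule sum_mono) (use assms(4,5) in \<open>auto intro!: mult_right_mono_neg\<close>)
  also have "\<dots> = - d * (\<Sum>e\<in>E. log 2 (p e)) + (\<Sum>e\<in>E. real (count_list w2 e) * log 2 (p e))"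
    by (simp add: left_diff_distrib sum_subtractf sum_distrib_left sum_negf)
  finally show ?thesis
    using assms(1-4)
    by (simp add: prod_list_eq_powr_sum_count_log[of E _ p 2] powr_add[symmetric])
qed

lemma typical_walks_count_le:
  assumes "w1 \<in> typical_walks E sg tu P u m \<zeta>" "w2 \<in> typical_walks E sg tu P u m \<zeta>" "e \<in> E"
  shows "real (count_list w2 e) \<le> real (count_list w1 e) + 2 * (real m * \<zeta>)"
proof (cases "m = 0")
  case True
  with assms show ?thesis
    by (simp add: typical_walks_def)
next
  case False
  from assms have "\<bar>real (count_list w1 e) / real m - P e\<bar> < \<zeta>"
    and "\<bar>real (count_list w2 e) / real m - P e\<bar> < \<zeta>"
    by (auto simp: typical_walks_def)
  then have "real (count_list w2 e) / real m \<le> real (count_list w1 e) / real m + 2 * \<zeta>"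
    by linarith
  with False show ?thesis
    by (simp add: field_simps)
qed

lemma typical_walk_prob_le:
  assumes "finite E" "\<forall>e\<in>E. 0 < P e"
    and "w1 \<in> typical_walks E sg tu P u m \<zeta>" "w2 \<in> typical_walks E sg tu P u m \<zeta>"
    and "real m * \<zeta> \<le> r"
  shows "walk_prob E sg P w1
    \<le> 2 powr (- 2 * r * (\<Sum>e\<in>E. log 2 (cond_prob E sg P e))) * walk_prob E sg P w2"
proof -
  have "\<forall>e\<in>E. real (count_list w2 e) \<le> real (count_list w1 e) + 2 * r"
    using typical_walks_count_le[OF assms(3,4)] assms(5) by fastforce
  moreover have "set w1 \<subseteq> E" "set w2 \<subseteq> E"
    using assms(3,4) by (auto simp: typical_walks_def is_walk_def)
  ultimately have "walk_prob E sg P w1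
      \<le> 2 powr (- (2 * r) * (\<Sum>e\<in>E. log 2 (cond_prob E sg P e))) * walk_prob E sg P w2"
    using cond_prob_pos_le_1[OF assms(1,2)]
    by (intro prod_list_le_powr_mult_prod_list[OF assms(1)]) auto
  then show ?thesis
    by simp
qed

lemma le_div_card_if_ratio_bounded:
  fixes g :: "'b \<Rightarrow> real"
  assumes "finite W" "x \<in> W" "0 \<le> R" "sum g W \<le> 1" "\<forall>y\<in>W. g x \<le> R * g y"
  shows "g x \<le> R / card W"
proof -
  have "real (card W) * g x = (\<Sum>y\<in>W. g x)"
    by simp
  also have "\<dots> \<le> (\<Sum>y\<in>W. R * g y)"
    using assms(5) by (intro sum_mono) blast
  also have "\<dots> = R * sum g W"
    by (simp add: sum_distrib_left)
  also have "\<dots> \<le> R"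
    using assms(3,4) by (simp add: mult_left_le)
  finally have "real (card W) * g x \<le> R" .
  moreover have "0 < card W"
    using assms(1,2) card_gt_0_iff by blast
  ultimately show ?thesis
    by (simp add: pos_le_divide_eq mult.commute)
qed

lemma inj_on_labels_of_prefix:
  assumes "deterministic E sg L"
  shows "inj_on (\<lambda>w. map L (w @ h w)) (walks_from E sg tu u k)"
proof (rule inj_onI)
  fix w1 w2
  assume w: "w1 \<in> walks_from E sg tu u k" "w2 \<in> walks_from E sg tu u k"
    and "map L (w1 @ h w1) = map L (w2 @ h w2)"
  then have "map L w1 = map L w2"
    using arg_cong[of _ _ "take k"] by (force simp: walks_from_def)
  with w show "w1 = w2"
    using deterministic_walks_eqI[OF assms] by (auto simp: walks_from_def)
qed

lemma inj_on_codeword: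
  assumes "deterministic E sg L"
  shows "inj_on (\<lambda>w. map L (w @ Phi E sg tu L P n vroot w)) (typical_walks E sg tu P vroot k \<zeta>)"
  using inj_on_labels_of_prefix[OF assms] typical_walks_subset_walks_from by (rule inj_on_subset)

lemma card_C_pool:
  assumes "deterministic E sg L"
  shows "card (C_pool E sg tu L P n k \<zeta> vroot) = card (typical_walks E sg tu P vroot k \<zeta>)"
  unfolding C_pool_def using inj_on_codeword[OF assms] by (rule card_image)

lemma code_prob_image_C_pool:
  assumes "deterministic E sg L"
  shows "code_prob E sg tu L P n k \<zeta> vroot ` C_pool E sg tu L P n k \<zeta> vroot
    = (\<lambda>w. walk_prob E sg P w) ` typical_walks E sg tu P vroot k \<zeta>"
proof -
  have "code_prob E sg tu L P n k \<zeta> vroot (map L (w @ Phi E sg tu L P n vroot w)) = walk_prob E sg P w"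
    if "w \<in> typical_walks E sg tu P vroot k \<zeta>" for w
    using that inj_on_codeword[OF assms, of tu P n vroot k \<zeta>] unfolding code_prob_def
    by (subst the_equality) (auto simp del: map_append dest: inj_onD)
  then show ?thesis
    unfolding C_pool_def image_image by (rule image_cong[OF refl])
qed

theorem claim2:
  fixes V :: "'v set" and E :: "'e set" and sg tu :: "'e \<Rightarrow> 'v"
    and L :: "'e \<Rightarrow> 'a::linorder" and \<Sigma> :: "'a set"
    and P :: "'e \<Rightarrow> real" and n :: nat and \<alpha> \<zeta> :: real and vroot :: 'v
  assumes "finite V" and "finite E" and "finite \<Sigma>"
    and "\<forall>e\<in>E. sg e \<in> V \<and> tu e \<in> V \<and> L e \<in> \<Sigma>"
    and "deterministic E sg L" and "lossless E sg tu L" and "primitive V E sg tu"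
    and "\<forall>e\<in>E. P e > 0" and "(\<Sum>e\<in>E. P e) = 1"
    and "\<forall>u\<in>V. stat_pi E sg P u = (\<Sum>e\<in>{e\<in>E. tu e = u}. P e)"
    and "n > 0" and "\<forall>e\<in>E. real n * P e \<in> \<int>"
    and "0 < \<alpha>" and "\<alpha> < 1"
    and "0 < \<zeta>" and "\<zeta> < (1 - \<alpha>) / \<alpha> * Min (P ` E)"
    and "vroot \<in> V"
    and "C_pool E sg tu L P n (nat \<lfloor>\<alpha> * real n\<rfloor>) \<zeta> vroot \<noteq> {}"
  shows "Max (code_prob E sg tu L P n (nat \<lfloor>\<alpha> * real n\<rfloor>) \<zeta> vroot
               ` C_pool E sg tu L P n (nat \<lfloor>\<alpha> * real n\<rfloor>) \<zeta> vroot)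
         \<le> 2 powr (- 2 * \<alpha> * real n * \<zeta> * (\<Sum>e\<in>E. log 2 (cond_prob E sg P e)))
           / real (card (C_pool E sg tu L P n (nat \<lfloor>\<alpha> * real n\<rfloor>) \<zeta> vroot))"
proof -
  define m where "m = nat \<lfloor>\<alpha> * real n\<rfloor>"
  define W where "W = typical_walks E sg tu P vroot m \<zeta>"
  define R where "R = 2 powr (- 2 * \<alpha> * real n * \<zeta> * (\<Sum>e\<in>E. log 2 (cond_prob E sg P e)))"
  have E: "finite E" "\<forall>e\<in>E. 0 < P e"
    using assms(2,8) by auto
  have W_walks: "W \<subseteq> walks_from E sg tu vroot m"
    unfolding W_def by (rule typical_walks_subset_walks_from)
  then have "finite W"
    using finite_walks_from[OF E(1)] by (rule finite_subset)
  have "W \<noteq> {}"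
    using assms(18) by (simp add: C_pool_def W_def m_def)
  have ratio: "walk_prob E sg P w1 \<le> R * walk_prob E sg P w2" if "w1 \<in> W" "w2 \<in> W" for w1 w2
  proof -
    have "real m * \<zeta> \<le> \<alpha> * real n * \<zeta>"
      unfolding m_def using assms(13,15) by (intro mult_right_mono) auto
    then have "walk_prob E sg P w1
        \<le> 2 powr (- 2 * (\<alpha> * real n * \<zeta>) * (\<Sum>e\<in>E. log 2 (cond_prob E sg P e))) * walk_prob E sg P w2"
      by (rule typical_walk_prob_le[OF E that[unfolded W_def]])
    then show ?thesis
      by (simp add: R_def mult.assoc)
  qed
  have R_nonneg: "0 \<le> R"
    by (simp add: R_def)
  have "walk_prob E sg P w \<le> R / card W" if "w \<in> W" for w
    using le_div_card_if_ratio_bounded[OF \<open>finite W\<close> that R_nonneg sum_walk_prob_le_1[OF E W_walks]]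
    by (simp add: ratio that)
  with \<open>finite W\<close> \<open>W \<noteq> {}\<close> show ?thesis
    by (simp add: code_prob_image_C_pool[OF assms(5)] card_C_pool[OF assms(5)] W_def m_def R_def Max_le_iff)
qed

end
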